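(* There is an absolute constant $c>0$ such that for every integer $n\ge1$ and every $q\in(0,\infty)$, $$\sup_{0\ne f\in\mathcal{T}_n}\frac{|f(0)|}{\|f\|_{L_q[0,1]}} \ge c^{1+1/q}(1+qn)^{2/q}.$$
   Context: For an integer $n\ge1$, $\mathcal{T}_n$ denotes the set of all functions $f:\mathbb{R}\to\mathbb{C}$ of the form $f(t)=\sum_{j=1}^n a_j e^{i\lambda_j t}$ with $a_j\in\mathbb{C}$ (possibly zero) and real exponents $\lambda_1<\lambda_2<\cdots<\lambda_n$. $\|f\|_{L_q[0,1]}=(\int_0^1|f(t)|^q\,dt)^{1/q}$. *)

theory Defs
  imports "HOL-Analysis.Analysis"
begin

text \<open>Exponential sums with at most n terms: f t = sum_{j<n} a_j exp(i lambda_j t),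
  with strictly increasing real exponents lambda_0 < ... < lambda_{n-1}
  (indices shifted to 0..n-1) and arbitrary complex coefficients.\<close>
definition exp_sums :: "nat \<Rightarrow> (real \<Rightarrow> complex) set" where
  "exp_sums n = {f. \<exists>(a::nat \<Rightarrow> complex) (lam::nat \<Rightarrow> real).
       (\<forall>i j. i < j \<and> j < n \<longrightarrow> lam i < lam j) \<and>
       (\<forall>t. f t = (\<Sum>j<n. a j * exp (\<i> * complex_of_real (lam j * t))))}"

definition Lq01_norm :: "real \<Rightarrow> (real \<Rightarrow> complex) \<Rightarrow> real" where
  "Lq01_norm q f = (LINT t:{0..1}|lborel. norm (f t) powr q) powr (1 / q)"

end

theory Submission
  imports Defs "HOL-Computational_Algebra.Polynomial"
begin

text \<open>
  The extremal functions are powers of a Fejer-type kernel. With \<open>T\<^sub>m\<close> the Chebyshev polynomial,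
  \<open>P\<^sub>m(w) = (1 - T\<^sub>m(1 - 2w))/(2m\<^sup>2w)\<close> has degree \<open>m - 1\<close>, \<open>P\<^sub>m(0) = 1\<close>, and
  \<open>0 \<le> P\<^sub>m(w) \<le> min 1 (1/(m\<^sup>2w))\<close> on \<open>[0,1]\<close>.
  Since \<open>sin s = (exp(is) - exp(-is))/(2i)\<close>, \<open>f(t) = P\<^sub>m(sin(\<pi>t/3))\<^sup>r\<close> is an exponential sum with
  \<open>2r(m - 1) + 1\<close> frequencies, and \<open>f(0) = 1\<close>. If \<open>rq \<ge> 2\<close> then
  \<open>|f|\<^sup>q \<le> P\<^sub>m\<^sup>2 \<le> 4/(1 + m\<^sup>2t/2)\<^sup>2\<close>, because \<open>sin(\<pi>t/3) \<ge> t/2\<close> on \<open>[0,1]\<close>; hence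
  \<open>\<integral>\<^sub>0\<^sup>1 |f|\<^sup>q \<le> 8/m\<^sup>2\<close>. Taking \<open>r = \<lceil>2/q\<rceil>\<close> and \<open>m\<close> as large as \<open>n\<close> allows, i.e. of order
  \<open>qn/(2 + q)\<close>, gives the bound; the factor \<open>(2 + q)\<^sup>2 \<le> 4e\<^sup>q\<close> lost on the way is absorbed by
  \<open>c\<^sup>q\<close> once \<open>c \<le> 1/e\<close>.
\<close>

fun cheb_poly :: "nat \<Rightarrow> real poly" where
  "cheb_poly 0 = 1"
| "cheb_poly (Suc 0) = [:0, 1:]"
| "cheb_poly (Suc (Suc k)) = [:0, 2:] * cheb_poly (Suc k) - cheb_poly k"

lemma poly_cheb_poly_cos: "poly (cheb_poly k) (cos x) = cos (real k * x)"
proof (induction k rule: cheb_poly.induct)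
  case (3 k)
  have "cos (real (Suc (Suc k)) * x) + cos (real k * x) = 2 * cos x * cos (real (Suc k) * x)"
    using cos_add[of "real (Suc k) * x" x] cos_diff[of "real (Suc k) * x" x]
    by (simp add: algebra_simps)
  with 3 show ?case by simp
qed simp_all

lemma poly_cheb_poly_one [simp]: "poly (cheb_poly k) 1 = 1"
  using poly_cheb_poly_cos[of k 0] by simp

lemma degree_cheb_poly_le: "degree (cheb_poly k) \<le> k"
proof (induction k rule: cheb_poly.induct)
  case (3 k)
  have "degree ([:0, 2:] * cheb_poly (Suc k)) \<le> Suc (Suc k)"
    using degree_mult_le[of "[:0, 2::real:]" "cheb_poly (Suc k)"] 3 by simp
  with 3 show ?case by (simp add: degree_diff_le)
qed simp_all

lemma poly_pderiv_cheb_poly_one: "poly (pderiv (cheb_poly k)) 1 = real k ^ 2"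
  by (induction k rule: cheb_poly.induct)
    (simp_all add: pderiv_mult pderiv_pCons pderiv_diff pderiv_smult power2_eq_square algebra_simps)

lemma abs_sin_mult_le: "\<bar>sin (real k * x)\<bar> \<le> real k * \<bar>sin x\<bar>"
proof (induction k)
  case (Suc k)
  have "\<bar>sin (real (Suc k) * x)\<bar> = \<bar>sin (real k * x) * cos x + cos (real k * x) * sin x\<bar>"
    using sin_add[of "real k * x" x] by (simp add: distrib_right add.commute)
  also have "\<dots> \<le> \<bar>sin (real k * x)\<bar> * \<bar>cos x\<bar> + \<bar>cos (real k * x)\<bar> * \<bar>sin x\<bar>"
    by (metis abs_mult abs_triangle_ineq)
  also have "\<dots> \<le> \<bar>sin (real k * x)\<bar> + \<bar>sin x\<bar>"
    by (intro add_mono mult_left_le mult_left_le_one_le) auto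
  finally show ?case using Suc by (simp add: distrib_right)
qed simp

text \<open>For \<open>w = sin\<^sup>2\<phi>\<close> this is \<open>sin\<^sup>2(m\<phi>) / (m\<^sup>2 sin\<^sup>2\<phi>)\<close>, a Fejer kernel in the variable \<open>w\<close>.
  Synthetic division by \<open>w\<close> is exact since \<open>T\<^sub>m(1) = 1\<close>.\<close>
definition kernel_poly :: "nat \<Rightarrow> real poly" where
  "kernel_poly m = smult (1 / (2 * real m ^ 2)) (synthetic_div (1 - cheb_poly m \<circ>\<^sub>p [:1, -2:]) 0)"

lemma kernel_poly_factor:
  "[:0, 1:] * smult (2 * real m ^ 2) (kernel_poly m) = 1 - cheb_poly m \<circ>\<^sub>p [:1, -2:]"
proof (cases "m = 0")
  case False
  have "poly (1 - cheb_poly m \<circ>\<^sub>p [:1, -2:]) 0 = 0"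
    by (simp add: poly_pcompose)
  with synthetic_div_correct'[of 0 "1 - cheb_poly m \<circ>\<^sub>p [:1, -2:]"] False show ?thesis
    by (simp add: kernel_poly_def)
qed (simp add: kernel_poly_def one_pCons)

lemma degree_kernel_poly_le: "degree (kernel_poly m) \<le> m - 1"
proof -
  have "degree (1 - cheb_poly m \<circ>\<^sub>p [:1, -2:]) \<le> m"
    using degree_cheb_poly_le[of m]
    by (intro degree_diff_le) (simp_all add: degree_pcompose)
  then show ?thesis by (simp add: kernel_poly_def degree_synthetic_div diff_le_mono)
qed

lemma poly_kernel_poly_0:
  assumes "m \<ge> 1"
  shows "poly (kernel_poly m) 0 = 1"
proof -
  have "poly (pderiv ([:0, 1:] * smult (2 * real m ^ 2) (kernel_poly m))) 0
      = poly (pderiv (1 - cheb_poly m \<circ>\<^sub>p [:1, -2:])) 0"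
    by (simp only: kernel_poly_factor)
  then show ?thesis using assms
    by (simp add: pderiv_mult pderiv_pCons pderiv_diff pderiv_pcompose poly_pcompose
        poly_pderiv_cheb_poly_one)
qed

lemma kernel_poly_sin_eq:
  assumes "w \<in> {0..1}"
  shows "real m ^ 2 * w * poly (kernel_poly m) w = sin (real m * arcsin (sqrt w)) ^ 2"
proof -
  define \<phi> where "\<phi> = arcsin (sqrt w)"
  have "sin \<phi> = sqrt w"
    unfolding \<phi>_def using assms by (intro sin_arcsin) (auto intro: order_trans[OF _ real_sqrt_ge_zero])
  then have cos_2\<phi>: "cos (2 * \<phi>) = 1 - 2 * w"
    using assms by (simp add: cos_double_sin)
  have "2 * (real m ^ 2 * w * poly (kernel_poly m) w)
      = poly ([:0, 1:] * smult (2 * real m ^ 2) (kernel_poly m)) w"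
    by simp
  also have "\<dots> = 1 - poly (cheb_poly m) (1 - 2 * w)"
    unfolding kernel_poly_factor by (simp add: poly_pcompose mult.commute)
  also have "\<dots> = 1 - poly (cheb_poly m) (cos (2 * \<phi>))"
    by (simp only: cos_2\<phi>)
  also have "\<dots> = 2 * sin (real m * \<phi>) ^ 2"
    using cos_double_sin[of "real m * \<phi>"] by (simp add: poly_cheb_poly_cos mult.left_commute)
  finally show ?thesis by (simp add: \<phi>_def)
qed

lemma kernel_poly_bounds:
  assumes m: "m \<ge> 1" and w: "w \<in> {0..1}"
  shows "0 \<le> poly (kernel_poly m) w" and "poly (kernel_poly m) w \<le> 1"
    and "real m ^ 2 * w * poly (kernel_poly m) w \<le> 1"
proof -
  let ?p = "poly (kernel_poly m) w" and ?\<phi> = "arcsin (sqrt w)"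
  have eq: "real m ^ 2 * w * ?p = sin (real m * ?\<phi>) ^ 2"
    using kernel_poly_sin_eq[OF w] .
  show "real m ^ 2 * w * ?p \<le> 1"
    unfolding eq by (simp add: abs_square_le_1)
  have "0 \<le> ?p \<and> ?p \<le> 1"
  proof (cases "w = 0")
    case True
    then show ?thesis using poly_kernel_poly_0[OF m] by simp
  next
    case False
    have "sin ?\<phi> ^ 2 = w"
      using w by (subst sin_arcsin) (auto intro: order_trans[OF _ real_sqrt_ge_zero])
    then have "sin (real m * ?\<phi>) ^ 2 \<le> real m ^ 2 * w"
      using abs_sin_mult_le[of m ?\<phi>]
      by (metis abs_ge_zero power2_abs power_mono power_mult_distrib)
    then have "real m ^ 2 * w * ?p \<le> real m ^ 2 * w * 1" "0 \<le> real m ^ 2 * w * ?p"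
      using eq by simp_all
    moreover have "real m ^ 2 * w > 0" using False w m by auto
    ultimately show ?thesis
      by (meson mult_le_cancel_left_pos zero_le_mult_iff not_le)
  qed
  then show "0 \<le> ?p" "?p \<le> 1" by auto
qed

lemma sine_poly_as_exp_poly:
  fixes G :: "real poly"
  obtains H :: "complex poly" where "degree H \<le> 2 * degree G"
    and "\<And>x. poly H (exp (\<i> * of_real x)) = exp (\<i> * of_real x) ^ degree G * of_real (poly G (sin x))"
proof -
  have "\<exists>H :: complex poly. degree H \<le> 2 * degree G \<and>
      (\<forall>x. poly H (exp (\<i> * of_real x)) = exp (\<i> * of_real x) ^ degree G * of_real (poly G (sin x)))"
  proof (induction G)
    case (pCons a p)
    show ?case
    proof (cases "p = 0")
      case True
      then show ?thesis by (intro exI[of _ "[:of_real a:]"]) simp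
    next
      case False
      from pCons.IH obtain Hp where deg: "degree Hp \<le> 2 * degree p"
        and Hp: "\<And>x. poly Hp (exp (\<i> * of_real x))
                    = exp (\<i> * of_real x) ^ degree p * of_real (poly p (sin x))"
        by blast
      define H where "H = monom (of_real a) (Suc (degree p)) + smult (1 / (2 * \<i>)) ([:-1, 0, 1:] * Hp)"
      have "degree H \<le> 2 * Suc (degree p)"
        unfolding H_def using deg degree_mult_le[of "[:-1, 0, 1:]" Hp]
        by (intro degree_add_le order_trans[OF degree_monom_le]) auto
      moreover have "poly H (exp (\<i> * of_real x))
          = exp (\<i> * of_real x) ^ Suc (degree p) * of_real (poly (pCons a p) (sin x))" for x
      proof -
        define z where "z = exp (\<i> * of_real x)"
        have "z \<noteq> 0" by (simp add: z_def)
        have sin_x: "(z ^ 2 - 1) / (2 * \<i>) = z * of_real (sin x)"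
          using \<open>z \<noteq> 0\<close> by (simp add: z_def sin_of_real[symmetric] sin_exp_eq exp_minus
              field_simps power2_eq_square)
        have "poly H z = of_real a * z ^ Suc (degree p) + (z ^ 2 - 1) / (2 * \<i>) * poly Hp z"
          by (simp add: H_def poly_monom power2_eq_square diff_divide_distrib algebra_simps)
        also have "\<dots> = z ^ Suc (degree p) * of_real (poly (pCons a p) (sin x))"
          unfolding sin_x by (simp add: Hp[of x, folded z_def] algebra_simps)
        finally show ?thesis by (simp add: z_def)
      qed
      ultimately show ?thesis using False by (intro exI[of _ H]) simp
    qed
  qed (rule exI[of _ 0], simp)
  with that show ?thesis by blast
qed

lemma poly_sin_in_exp_sums:
  fixes G :: "real poly"
  assumes "\<alpha> > 0" and "2 * degree G + 1 \<le> n"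
  shows "(\<lambda>t. complex_of_real (poly G (sin (\<alpha> * t)))) \<in> exp_sums n"
proof -
  obtain H where deg: "degree H \<le> 2 * degree G"
    and H: "\<And>x. poly H (exp (\<i> * of_real x)) = exp (\<i> * of_real x) ^ degree G * of_real (poly G (sin x))"
    using sine_poly_as_exp_poly[of G] by blast
  define lam where "lam j = (real j - real (degree G)) * \<alpha>" for j
  have "complex_of_real (poly G (sin (\<alpha> * t))) = (\<Sum>j<n. coeff H j * exp (\<i> * of_real (lam j * t)))"
    for t
  proof -
    define z where "z = exp (\<i> * of_real (\<alpha> * t))"
    have exp_lam: "exp (\<i> * of_real (lam j * t)) = z ^ j * inverse z ^ degree G" for j
    proof -
      have "\<i> * of_real (lam j * t)
          = of_nat j * (\<i> * of_real (\<alpha> * t)) - of_nat (degree G) * (\<i> * of_real (\<alpha> * t))"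
        by (simp add: lam_def algebra_simps)
      then show ?thesis
        by (simp add: z_def exp_diff exp_of_nat_mult power_inverse divide_inverse)
    qed
    have "poly H z = (\<Sum>j<n. coeff H j * z ^ j)"
      unfolding poly_altdef using deg assms(2)
      by (intro sum.mono_neutral_left) (auto simp: coeff_eq_0)
    then have "complex_of_real (poly G (sin (\<alpha> * t))) = inverse z ^ degree G * (\<Sum>j<n. coeff H j * z ^ j)"
      using H[of "\<alpha> * t", folded z_def] by (simp add: z_def field_simps)
    then show ?thesis unfolding exp_lam by (simp add: sum_distrib_left algebra_simps)
  qed
  moreover have "lam i < lam j" if "i < j" for i j
    using that assms(1) by (simp add: lam_def)
  ultimately show ?thesis unfolding exp_sums_def by blast
qed

lemma sin_ge_half_self:
  assumes "0 \<le> x" "x \<le> pi / 3"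
  shows "x / 2 \<le> sin x"
proof -
  have "sin 0 - 0 / 2 \<le> sin x - x / 2"
  proof (rule DERIV_nonneg_imp_increasing_open[OF assms(1)])
    fix y assume y: "0 < y" "y < x"
    have "cos (pi / 3) \<le> cos y"
      using y assms by (subst cos_mono_le_eq) auto
    then show "\<exists>d. ((\<lambda>y. sin y - y / 2) has_real_derivative d) (at y) \<and> 0 \<le> d"
      by (auto intro!: derivative_eq_intros simp: cos_60)
  qed (auto intro!: continuous_intros)
  then show ?thesis by simp
qed

lemma has_integral_inverse_square:
  fixes b :: real
  assumes "b \<ge> 0"
  shows "((\<lambda>t. 1 / (1 + b * t) ^ 2) has_integral 1 / (1 + b)) {0..1}"
proof -
  have "((\<lambda>t. 1 / (1 + b * t) ^ 2) has_integral (1 / (1 + b * 1) - 0 / (1 + b * 0))) {0..1}"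
  proof (rule fundamental_theorem_of_calculus)
    fix t :: real assume "t \<in> {0..1}"
    then have "1 + b * t > 0" using assms by (simp add: add_pos_nonneg)
    then show "((\<lambda>t. t / (1 + b * t)) has_vector_derivative 1 / (1 + b * t) ^ 2) (at t within {0..1})"
      unfolding has_real_derivative_iff_has_vector_derivative[symmetric]
      by (auto intro!: derivative_eq_intros simp: field_simps power2_eq_square)
  qed simp
  then show ?thesis by simp
qed

lemma Lq01_norm_eq_integral:
  assumes "continuous_on {0..1} f" and "q > 0"
  shows "(\<lambda>t. norm (f t) powr q) integrable_on {0..1}"
    and "Lq01_norm q f = integral {0..1} (\<lambda>t. norm (f t) powr q) powr (1 / q)"
proof -
  have "continuous_on {0..1} (\<lambda>t. norm (f t) powr q)"
    using assms by (intro continuous_on_powr' continuous_intros) auto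
  then have "set_integrable lborel {0..1} (\<lambda>t. norm (f t) powr q)"
    unfolding set_integrable_def by (rule borel_integrable_compact[OF compact_Icc])
  from set_borel_integral_eq_integral[OF this]
  show "(\<lambda>t. norm (f t) powr q) integrable_on {0..1}"
    and "Lq01_norm q f = integral {0..1} (\<lambda>t. norm (f t) powr q) powr (1 / q)"
    by (simp_all add: Lq01_norm_def)
qed

lemma kernel_poly_power_decay:
  assumes m: "m \<ge> 1" and rq: "real r * q \<ge> 2" and t: "t \<in> {0..1}"
  shows "\<bar>poly (kernel_poly m ^ r) (sin (pi / 3 * t))\<bar> powr q \<le> 4 * (1 / (1 + real m ^ 2 / 2 * t) ^ 2)"
proof -
  define w where "w = sin (pi / 3 * t)"
  have "t / 2 \<le> pi / 3 * t / 2"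
    using t pi_gt3 by (auto intro!: mult_right_mono)
  also have "\<dots> \<le> w"
    unfolding w_def using t by (intro sin_ge_half_self) auto
  finally have tw: "t / 2 \<le> w" .
  then have w01: "w \<in> {0..1}" using t by (auto simp: w_def)
  define p where "p = poly (kernel_poly m) w"
  note p = kernel_poly_bounds[OF m w01, folded p_def]
  have powr_le: "\<bar>p ^ r\<bar> powr q \<le> p ^ 2"
  proof (cases "p = 0")
    case False
    then have "\<bar>p ^ r\<bar> powr q = p powr (real r * q)"
      using p(1) by (simp add: powr_realpow[symmetric] powr_powr)
    also have "\<dots> \<le> p powr 2"
      using p(1,2) rq by (intro powr_mono') auto
    finally show ?thesis using False p(1) by simp
  qed (use rq in \<open>cases r, auto\<close>)
  have "p * (1 + real m ^ 2 / 2 * t) \<le> 2"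
  proof -
    have "real m ^ 2 / 2 * t \<le> real m ^ 2 * w"
      using mult_left_mono[OF tw, of "real m ^ 2"] by simp
    then have "real m ^ 2 / 2 * t * p \<le> real m ^ 2 * w * p"
      using p(1) by (rule mult_right_mono)
    then show ?thesis using p(2,3) by (simp add: algebra_simps)
  qed
  then have "(p * (1 + real m ^ 2 / 2 * t)) ^ 2 \<le> 2 ^ 2"
    using p(1) t by (intro power_mono) auto
  moreover have "(1 + real m ^ 2 / 2 * t) ^ 2 > 0"
    using t by (intro zero_less_power add_pos_nonneg) auto
  ultimately have "p ^ 2 \<le> 4 / (1 + real m ^ 2 / 2 * t) ^ 2"
    by (simp add: power_mult_distrib pos_le_divide_eq)
  with powr_le show ?thesis
    by (simp add: p_def w_def poly_power)
qed

lemma Lq01_norm_pos: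
  assumes "continuous_on {0..1} f" and "q > 0" and "f 0 \<noteq> 0"
  shows "Lq01_norm q f > 0"
proof -
  let ?F = "\<lambda>t. norm (f t) powr q"
  have "continuous_on {0..1} ?F"
    using assms by (intro continuous_on_powr' continuous_intros) auto
  then have "integral {0..1} ?F = 0 \<longleftrightarrow> (\<forall>t\<in>{0..1}. ?F t = 0)"
    by (rule integral_eq_0_iff) auto
  moreover have "integral {0..1} ?F \<ge> 0"
    using Lq01_norm_eq_integral(1)[OF assms(1,2)] by (rule integral_nonneg) auto
  ultimately have "integral {0..1} ?F > 0"
    using assms(3) by force
  then show ?thesis
    using Lq01_norm_eq_integral(2)[OF assms(1,2)] by simp
qed

definition kernel_exp_sum :: "nat \<Rightarrow> nat \<Rightarrow> real \<Rightarrow> complex" where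
  "kernel_exp_sum m r t = complex_of_real (poly (kernel_poly m ^ r) (sin (pi / 3 * t)))"

lemma kernel_exp_sum_in_exp_sums:
  assumes "2 * (r * (m - 1)) + 1 \<le> n"
  shows "kernel_exp_sum m r \<in> exp_sums n"
proof -
  have "degree (kernel_poly m ^ r) \<le> r * (m - 1)"
    using degree_power_le[of "kernel_poly m" r] degree_kernel_poly_le[of m]
    by (metis le_trans mult.commute mult_le_mono2)
  then show ?thesis
    unfolding kernel_exp_sum_def[abs_def] using assms by (intro poly_sin_in_exp_sums) auto
qed

lemma kernel_exp_sum_0: "m \<ge> 1 \<Longrightarrow> kernel_exp_sum m r 0 = 1"
  by (simp add: kernel_exp_sum_def poly_power poly_kernel_poly_0)

lemma continuous_on_kernel_exp_sum: "continuous_on A (kernel_exp_sum m r)"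
  unfolding kernel_exp_sum_def[abs_def] by (intro continuous_intros)

lemma Lq01_norm_kernel_exp_sum_le:
  assumes m: "m \<ge> 1" and q: "q > 0" and rq: "real r * q \<ge> 2"
  shows "Lq01_norm q (kernel_exp_sum m r) \<le> (8 / real m ^ 2) powr (1 / q)"
proof -
  define F where "F = (\<lambda>t. norm (kernel_exp_sum m r t) powr q)"
  note F_int = Lq01_norm_eq_integral[OF continuous_on_kernel_exp_sum[of _ m r] q, folded F_def]
  have F_le: "F t \<le> 4 * (1 / (1 + real m ^ 2 / 2 * t) ^ 2)" if "t \<in> {0..1}" for t
    using kernel_poly_power_decay[OF m rq that] by (simp only: F_def kernel_exp_sum_def norm_of_real)
  have bound_int: "((\<lambda>t. 4 * (1 / (1 + real m ^ 2 / 2 * t) ^ 2)) has_integral 4 * (1 / (1 + real m ^ 2 / 2))) {0..1}"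
    by (intro has_integral_mult_right has_integral_inverse_square) simp
  have "integral {0..1} F \<le> 4 * (1 / (1 + real m ^ 2 / 2))"
    using integrable_integral[OF F_int(1)] bound_int F_le by (rule has_integral_le)
  also have "\<dots> = 4 / (1 + real m ^ 2 / 2)"
    by simp
  also have "\<dots> \<le> 4 / (real m ^ 2 / 2)"
    using m by (intro divide_left_mono mult_pos_pos add_pos_pos) auto
  finally have "integral {0..1} F \<le> 8 / real m ^ 2" by simp
  moreover have "integral {0..1} F \<ge> 0"
    using F_int(1) by (rule integral_nonneg) (simp add: F_def)
  ultimately show ?thesis
    unfolding F_int(2) using q by (intro powr_mono2) auto
qed

lemma exp_sum_with_small_Lq01_norm:
  assumes m: "m \<ge> 1" and q: "q > 0" and rq: "real r * q \<ge> 2"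
    and n: "2 * (r * (m - 1)) + 1 \<le> n"
  shows "\<exists>f\<in>exp_sums n. f \<noteq> (\<lambda>_. 0) \<and> (real m ^ 2 / 8) powr (1 / q) \<le> norm (f 0) / Lq01_norm q f"
proof (intro bexI conjI)
  let ?f = "kernel_exp_sum m r"
  show "?f \<in> exp_sums n" using kernel_exp_sum_in_exp_sums[OF n] .
  show "?f \<noteq> (\<lambda>_. 0)" using kernel_exp_sum_0[OF m] by (metis zero_neq_one)
  have pos: "Lq01_norm q ?f > 0"
    using kernel_exp_sum_0[OF m] by (intro Lq01_norm_pos continuous_on_kernel_exp_sum q) simp
  have "(real m ^ 2 / 8) powr (1 / q) = 1 / (8 / real m ^ 2) powr (1 / q)"
    by (simp add: powr_divide)
  also have "\<dots> \<le> 1 / Lq01_norm q ?f"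
    using Lq01_norm_kernel_exp_sum_le[OF m q rq] pos m by (intro divide_left_mono) auto
  also have "\<dots> = norm (?f 0) / Lq01_norm q ?f"
    by (simp add: kernel_exp_sum_0[OF m])
  finally show "(real m ^ 2 / 8) powr (1 / q) \<le> norm (?f 0) / Lq01_norm q ?f" .
qed

lemma exists_nat_mult_between:
  fixes a q :: real
  assumes "a \<ge> 0" and "q > 0"
  obtains r :: nat where "a \<le> real r * q" and "real r * q \<le> a + q"
proof
  define r where "r = nat \<lceil>a / q\<rceil>"
  have r: "real r = of_int \<lceil>a / q\<rceil>"
    using assms by (simp add: r_def)
  have "a / q \<le> real r" "real r < a / q + 1"
    unfolding r by linarith+
  with assms show "a \<le> real r * q" "real r * q \<le> a + q"
    by (simp_all add: field_simps)
qed

lemma exists_nat_mult_bracket: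
  fixes k n :: nat
  assumes "k > 0" and "n \<ge> 1"
  obtains m where "m \<ge> 1" and "k * (m - 1) < n" and "n \<le> k * m"
proof
  define m where "m = (n - 1) div k + 1"
  show "m \<ge> 1" by (simp add: m_def)
  have "k * ((n - 1) div k) \<le> n - 1"
    using div_times_less_eq_dividend[of "n - 1" k] by (simp add: mult.commute)
  then have "k * ((n - 1) div k) < n"
    using assms(2) by linarith
  then show "k * (m - 1) < n"
    by (simp add: m_def)
  have "k * ((n - 1) div k) + (n - 1) mod k = n - 1"
    by (rule mult_div_mod_eq)
  moreover have "(n - 1) mod k < k"
    using assms(1) by simp
  ultimately have "n \<le> k * ((n - 1) div k) + k"
    using assms(2) by linarith
  then show "n \<le> k * m"
    by (simp add: m_def algebra_simps)
qed

lemma square_two_plus_le_exp: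
  fixes q :: real
  assumes "q \<ge> -2"
  shows "(2 + q) ^ 2 \<le> 4 * exp q"
proof -
  have "(1 + q / 2) ^ 2 \<le> exp (q / 2) ^ 2"
    using assms by (intro power_mono exp_ge_add_one_self) auto
  then show ?thesis
    by (simp add: power2_eq_square algebra_simps flip: exp_add)
qed

lemma size_power_bound:
  fixes m n :: nat and q :: real
  assumes q: "q > 0" and m: "m \<ge> 1" and mn: "real n * q \<le> 2 * real m * (2 + q)"
  shows "(1 / 512) powr (q + 1) * (1 + q * real n) ^ 2 \<le> real m ^ 2 / 8"
proof -
  have "1 / 512 \<le> inverse (3 :: real)" by simp
  also have "\<dots> \<le> exp (-1)"
    using le_imp_inverse_le[OF exp_le] by (simp add: exp_minus)
  finally have "(1 / 512 :: real) powr q \<le> exp (-1) powr q"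
    using q by (intro powr_mono2) auto
  then have c: "(1 / 512 :: real) powr q \<le> exp (-q)"
    by (simp add: powr_def)
  have "1 * 1 \<le> real m * (2 * (2 + q))"
    using m q by (intro mult_mono) auto
  then have "1 + q * real n \<le> 4 * (2 + q) * real m"
    using mn by (simp add: algebra_simps)
  then have "(1 + q * real n) ^ 2 \<le> (4 * (2 + q) * real m) ^ 2"
    using q by (intro power_mono) auto
  also have "\<dots> = 16 * (2 + q) ^ 2 * real m ^ 2"
    by (simp only: power_mult_distrib) simp
  also have "\<dots> \<le> 16 * (4 * exp q) * real m ^ 2"
    using square_two_plus_le_exp[of q] q by (intro mult_right_mono mult_left_mono) auto
  finally have n: "(1 + q * real n) ^ 2 \<le> 16 * (4 * exp q) * real m ^ 2" .
  have "(1 / 512) powr (q + 1) * (1 + q * real n) ^ 2 = 1 / 512 * ((1 / 512) powr q * (1 + q * real n) ^ 2)"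
    by (simp add: powr_add)
  also have "\<dots> \<le> 1 / 512 * (exp (-q) * (16 * (4 * exp q) * real m ^ 2))"
    using mult_mono[OF c n] by (intro mult_left_mono) auto
  also have "\<dots> = real m ^ 2 / 8 * (exp (-q) * exp q)"
    by (simp add: mult_ac)
  also have "\<dots> = real m ^ 2 / 8"
    by (simp flip: exp_add)
  finally show ?thesis .
qed

lemma lower_bound_le_kernel_ratio:
  fixes m n :: nat and q :: real
  assumes q: "q > 0" and m: "m \<ge> 1" and mn: "real n * q \<le> 2 * real m * (2 + q)"
  shows "(1 / 512) powr (1 + 1 / q) * (1 + q * real n) powr (2 / q) \<le> (real m ^ 2 / 8) powr (1 / q)"
proof -
  have "(q + 1) * (1 / q) = 1 + 1 / q"
    using q by (simp add: field_simps)
  then have c_powr: "(1 / 512 :: real) powr (1 + 1 / q) = ((1 / 512) powr (q + 1)) powr (1 / q)"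
    by (simp only: powr_powr)
  have "(1 + q * real n) ^ 2 = (1 + q * real n) powr 2"
    using q by (subst powr_realpow[of _ 2, simplified]) (auto intro: add_pos_nonneg)
  then have n_powr: "(1 + q * real n) powr (2 / q) = ((1 + q * real n) ^ 2) powr (1 / q)"
    by (simp add: powr_powr)
  have "(1 / 512) powr (1 + 1 / q) * (1 + q * real n) powr (2 / q)
      = ((1 / 512) powr (q + 1) * (1 + q * real n) ^ 2) powr (1 / q)"
    unfolding c_powr n_powr by (rule powr_mult[symmetric])
  also have "\<dots> \<le> (real m ^ 2 / 8) powr (1 / q)"
    using size_power_bound[OF q m mn] q by (intro powr_mono2) auto
  finally show ?thesis .
qed

theorem theorem2p7:
  shows "\<exists>c::real. c > 0 \<and>
    (\<forall>(n::nat) (q::real). n \<ge> 1 \<longrightarrow> q > 0 \<longrightarrow>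
      (SUP f\<in>{f \<in> exp_sums n. f \<noteq> (\<lambda>_. 0)}. ereal (norm (f 0) / Lq01_norm q f))
        \<ge> ereal (c powr (1 + 1 / q) * (1 + q * real n) powr (2 / q)))"
proof (intro exI[of _ "1 / 512"] conjI allI impI)
  fix n :: nat and q :: real
  assume n: "n \<ge> 1" and q: "q > 0"
  obtain r :: nat where r: "2 \<le> real r * q" "real r * q \<le> 2 + q"
    using exists_nat_mult_between[of 2 q] q by auto
  then have "2 * r > 0" by (cases r) auto
  then obtain m where m: "m \<ge> 1" "2 * r * (m - 1) < n" "n \<le> 2 * r * m"
    using exists_nat_mult_bracket n by blast
  have "2 * (r * (m - 1)) + 1 \<le> n"
    using m(2) by simp
  then obtain f where f: "f \<in> exp_sums n" "f \<noteq> (\<lambda>_. 0)"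
    and ratio: "(real m ^ 2 / 8) powr (1 / q) \<le> norm (f 0) / Lq01_norm q f"
    using exp_sum_with_small_Lq01_norm[OF m(1) q r(1)] by blast
  have "real n * q \<le> real (2 * r * m) * q"
    using m(3) q by (intro mult_right_mono) (simp_all only: of_nat_le_iff less_imp_le)
  also have "\<dots> = 2 * real m * (real r * q)"
    by simp
  also have "\<dots> \<le> 2 * real m * (2 + q)"
    using r(2) by (intro mult_left_mono) auto
  finally have "(1 / 512) powr (1 + 1 / q) * (1 + q * real n) powr (2 / q) \<le> norm (f 0) / Lq01_norm q f"
    using lower_bound_le_kernel_ratio[OF q m(1)] ratio by (meson order_trans)
  then show "ereal ((1 / 512) powr (1 + 1 / q) * (1 + q * real n) powr (2 / q))
      \<le> (SUP f\<in>{f \<in> exp_sums n. f \<noteq> (\<lambda>_. 0)}. ereal (norm (f 0) / Lq01_norm q f))"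
    using f by (intro order_trans[OF _ SUP_upper]) auto
qed simp

end
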